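(* Let $\{S_i\}_{i\in\mathcal I}$ be a finite family of contracting similarities of $\mathbb{R}^d$, written $S_i(x)=c_iM_i(x)+b_i$ with $c_i\in(0,1)$, $M_i$ orthogonal and $b_i\in\mathbb{R}^d$, and let $T_i(x)=c_iM_i(x)$. Let $\gamma\ge0$ be defined by $\limsup_{k\to\infty}|\{T_I: I\in\mathcal I_k\}|^{1/k}=2^\gamma$. If $d=1$ or $d=2$, or if the matrices $M_i$ ($i\in\mathcal I$) commute, then $\gamma=0$.
   Context: $\mathcal I^*$ is the set of finite non-empty words over $\mathcal I$; for $I=(i_1,\dots,i_k)$, $T_I=T_{i_1}\circ\cdots\circ T_{i_k}$ and $c_I=c_{i_1}\cdots c_{i_k}$. For $k\ge0$, $\mathcal I_k=\{I\in\mathcal I^*: 2^{-k-1}<c_I\le2^{-k}\}$. *)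

theory Defs
  imports "HOL-Analysis.Analysis"
begin

definition word_map :: "('i \<Rightarrow> 'a \<Rightarrow> 'a) \<Rightarrow> 'i list \<Rightarrow> 'a \<Rightarrow> 'a" where
  "word_map T I = foldr (\<lambda>i f. T i \<circ> f) I id"

definition word_ratio :: "('i \<Rightarrow> real) \<Rightarrow> 'i list \<Rightarrow> real" where
  "word_ratio c I = prod_list (map c I)"

definition level_words :: "('i \<Rightarrow> real) \<Rightarrow> nat \<Rightarrow> 'i list set" where
  "level_words c k = {I. I \<noteq> [] \<and> 2 powr (- real k - 1) < word_ratio c I \<and> word_ratio c I \<le> 2 powr (- real k)}"

end

theory Submission
  imports Defs "HOL-Real_Asymp.Real_Asymp"
begin

text \<open>The map T_I is x \<mapsto> c_I M_I x with M_I = M_i1 \<cdots> M_ik, and c_I only depends on how often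
  each letter occurs in I. So does M_I when the M_i commute, which is automatic in dimension 1. In
  dimension 2 every M_i acts on \<complex> either as w \<mapsto> z_i w or as w \<mapsto> z_i cnj w with |z_i| = 1; then M_I
  is determined by the parity of the number of reflections in I and by an exponent vector n with
  |n_j| \<le> |I| such that M_I 1 = \<Prod>_j z_j^n_j. Words in \<I>_k have length O(k), hence there are only
  polynomially many maps T_I with I \<in> \<I>_k, and the k-th root of their number tends to 1.\<close>

lemma card_image_le_if_factors:
  assumes "finite (g ` W)" and "\<And>x y. x \<in> W \<Longrightarrow> y \<in> W \<Longrightarrow> g x = g y \<Longrightarrow> h x = h y"
  shows "card (h ` W) \<le> card (g ` W)"
proof -
  have "h x = h (inv_into W g (g x))" if "x \<in> W" for x
    using that by (intro assms(2)) (auto intro: inv_into_into simp: f_inv_into_f)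
  then have "h ` W = (h \<circ> inv_into W g) ` g ` W"
    unfolding image_comp by (auto intro: image_cong)
  then show ?thesis by (metis assms(1) card_image_le)
qed

lemma limsup_root_le_1_if_polynomial_bound:
  fixes f :: "nat \<Rightarrow> real"
  assumes bound: "\<And>k. f k \<le> K * (real k + 1) ^ p" and nonneg: "\<And>k. 0 \<le> f k" and "K > 0"
  shows "limsup (\<lambda>k. ereal (f k powr (1 / real k))) \<le> 1"
proof -
  have "(\<lambda>k::nat. K powr (1 / real k)) \<longlonglongrightarrow> K powr 0"
    by (rule tendsto_powr[OF tendsto_const lim_inverse_n']) (use \<open>K > 0\<close> in simp)
  then have root_K: "(\<lambda>k::nat. K powr (1 / real k)) \<longlonglongrightarrow> 1"
    using \<open>K > 0\<close> by simp
  have root_k: "(\<lambda>k::nat. (real k + 1) powr (1 / real k)) \<longlonglongrightarrow> 1" by real_asymp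
  have root_split: "(K * (real k + 1) ^ p) powr (1 / real k)
      = K powr (1 / real k) * ((real k + 1) powr (1 / real k)) ^ p" for k :: nat
    using \<open>K > 0\<close> by (simp add: powr_mult powr_powr mult.commute flip: powr_power powr_realpow)
  have "(\<lambda>k. ereal ((K * (real k + 1) ^ p) powr (1 / real k))) \<longlonglongrightarrow> ereal 1"
    unfolding root_split using tendsto_mult[OF root_K tendsto_power[OF root_k, of p]]
    by (intro tendsto_ereal) simp
  then have "limsup (\<lambda>k. ereal ((K * (real k + 1) ^ p) powr (1 / real k))) = 1"
    by (simp add: lim_imp_Limsup one_ereal_def)
  moreover have "limsup (\<lambda>k. ereal (f k powr (1 / real k)))
      \<le> limsup (\<lambda>k. ereal ((K * (real k + 1) ^ p) powr (1 / real k)))"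
    by (rule Limsup_mono) (auto intro!: always_eventually powr_mono2 bound nonneg)
  ultimately show ?thesis by simp
qed

subsection \<open>Words and their linear parts\<close>

definition word_matrix :: "('i \<Rightarrow> real^'n^'n) \<Rightarrow> 'i list \<Rightarrow> real^'n^'n" where
  "word_matrix M I = foldr (\<lambda>i A. M i ** A) I (mat 1)"

lemma word_matrix_Nil [simp]: "word_matrix M [] = mat 1"
  by (simp add: word_matrix_def)

lemma word_matrix_Cons [simp]: "word_matrix M (i # I) = M i ** word_matrix M I"
  by (simp add: word_matrix_def)

lemma word_matrix_append: "word_matrix M (I @ J) = word_matrix M I ** word_matrix M J"
  by (induction I) (auto simp: matrix_mul_assoc)

lemma orthogonal_matrix_word_matrix: "(\<And>i. orthogonal_matrix (M i)) \<Longrightarrow> orthogonal_matrix (word_matrix M I)"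
  by (induction I) (auto simp: orthogonal_matrix_id orthogonal_matrix_mul)

lemma word_map_scaled_linear:
  "word_map (\<lambda>i x. c i *\<^sub>R (M i *v x)) I = (\<lambda>x. word_ratio c I *\<^sub>R (word_matrix M I *v x))"
  by (induction I)
    (auto simp: word_map_def word_ratio_def matrix_vector_mult_scaleR matrix_vector_mul_assoc)

lemma word_ratio_mset_eq: "mset I = mset J \<Longrightarrow> word_ratio c I = word_ratio c J"
  unfolding word_ratio_def by (metis mset_map prod_mset_prod_list)

lemma word_ratio_bounds:
  assumes "\<And>i. 0 < c i" "\<And>i. c i \<le> r"
  shows "0 < word_ratio c I \<and> word_ratio c I \<le> r ^ length I"
proof (induction I)
  case (Cons i I)
  then show ?case
    using assms[of i] by (auto simp: word_ratio_def intro!: mult_mono mult_pos_pos)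
qed (simp add: word_ratio_def)

lemma level_words_length_le:
  fixes c :: "'i::finite \<Rightarrow> real"
  assumes "\<And>i. 0 < c i" "\<And>i. c i < 1"
  obtains A :: nat where "\<And>k I. I \<in> level_words c k \<Longrightarrow> length I \<le> A * (k + 1)"
proof -
  define r where "r = Max (range c)"
  have c_le_r: "c i \<le> r" for i
    unfolding r_def by simp
  have r: "0 < r" "r < 1"
    using less_le_trans[OF assms(1) c_le_r] assms(2) by (auto simp: r_def Max_less_iff)
  define A where "A = nat \<lceil>ln 2 / - ln r\<rceil>"
  have "length I \<le> A * (k + 1)" if "I \<in> level_words c k" for k I
  proof -
    have "2 powr (- real k - 1) < r powr real (length I)"
      using that word_ratio_bounds[of c r I, OF assms(1) c_le_r] r
      by (auto simp: level_words_def powr_realpow)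
    then have "ln (2 powr (- real k - 1)) < ln (r powr real (length I))"
      using r by (subst ln_less_cancel_iff) auto
    then have "(- real k - 1) * ln 2 < real (length I) * ln r"
      using r by (simp add: ln_powr)
    then have "real (length I) < (real k + 1) * (ln 2 / - ln r)"
      using r by (simp add: field_simps)
    also have "\<dots> \<le> (real k + 1) * real A"
      unfolding A_def by (intro mult_left_mono) (auto intro: real_nat_ceiling_ge)
    finally have "real (length I) < real (A * (k + 1))"
      by (simp add: mult.commute distrib_left)
    then show ?thesis
      by linarith
  qed
  then show ?thesis by (rule that)
qed

subsection \<open>Commuting matrices\<close>

lemma commute_word_matrix:
  assumes "\<And>i j. M i ** M j = M j ** M i"
  shows "M i ** word_matrix M J = word_matrix M J ** M i"
proof (induction J)
  case (Cons j J)
  have "M i ** word_matrix M (j # J) = M j ** (M i ** word_matrix M J)"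
    by (simp add: assms matrix_mul_assoc)
  also have "\<dots> = word_matrix M (j # J) ** M i"
    by (simp add: Cons matrix_mul_assoc)
  finally show ?case .
qed simp

lemma word_matrix_mset_eq:
  assumes comm: "\<And>i j. M i ** M j = M j ** M i"
  shows "mset I = mset J \<Longrightarrow> word_matrix M I = word_matrix M J"
proof (induction I arbitrary: J)
  case (Cons i I)
  then have "i \<in> set J"
    by (metis list.set_intros(1) set_mset_mset)
  then obtain J1 J2 where J: "J = J1 @ i # J2"
    by (meson split_list)
  then have "word_matrix M I = word_matrix M (J1 @ J2)"
    using Cons by simp
  then have "word_matrix M (i # I) = (M i ** word_matrix M J1) ** word_matrix M J2"
    by (simp add: word_matrix_append matrix_mul_assoc)
  also have "\<dots> = word_matrix M J"
    by (subst commute_word_matrix[OF comm]) (simp add: J word_matrix_append matrix_mul_assoc)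
  finally show ?case .
qed simp

lemma matrix_mul_commute_if_CARD_1:
  assumes "CARD('n::finite) = 1"
  shows "(A :: real^'n^'n) ** B = B ** A"
proof -
  obtain u :: 'n where u: "UNIV = {u}"
    using assms card_1_singletonE by blast
  then have "i = u" for i :: 'n
    by auto
  then show ?thesis
    by (simp add: vec_eq_iff matrix_matrix_mult_def u) (metis mult.commute)
qed

subsection \<open>Orthogonal matrices of the plane\<close>

text \<open>Identifying the plane with \<complex> via the basis u, v, a rotation acts as w \<mapsto> z w and a reflection
  as w \<mapsto> z cnj w, where z is the first column read as a complex number.\<close>

definition is_rotation2 :: "'n \<Rightarrow> 'n \<Rightarrow> real^'n^'n \<Rightarrow> bool" where
  "is_rotation2 u v A \<longleftrightarrow> A$v$v = A$u$u \<and> A$u$v = - A$v$u"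

definition is_reflection2 :: "'n \<Rightarrow> 'n \<Rightarrow> real^'n^'n \<Rightarrow> bool" where
  "is_reflection2 u v A \<longleftrightarrow> A$v$v = - A$u$u \<and> A$u$v = A$v$u"

definition column_complex :: "'n \<Rightarrow> 'n \<Rightarrow> real^'n^'n \<Rightarrow> complex" where
  "column_complex u v A = Complex (A$u$u) (A$v$u)"

definition powi_prod :: "('i::finite \<Rightarrow> 'a::field) \<Rightarrow> ('i \<Rightarrow> int) \<Rightarrow> 'a" where
  "powi_prod z n = (\<Prod>j\<in>UNIV. z j powi n j)"

text \<open>The exponent vector of M_I in terms of the complex parameters of the letters: a reflection
  conjugates, hence negates, everything to its right.\<close>

fun twisted_exponent :: "('i \<Rightarrow> bool) \<Rightarrow> 'i list \<Rightarrow> 'i \<Rightarrow> int" where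
  "twisted_exponent r [] = (\<lambda>_. 0)"
| "twisted_exponent r (i # I) =
    (\<lambda>j. (if j = i then 1 else 0) + (if r i then - twisted_exponent r I j else twisted_exponent r I j))"

lemma abs_twisted_exponent_le: "\<bar>twisted_exponent r I j\<bar> \<le> int (length I)"
  by (induction I) (auto simp: abs_if split: if_splits)

lemma powi_prod_twisted_step:
  fixes z :: "'i::finite \<Rightarrow> complex"
  assumes "\<And>j. cmod (z j) = 1"
  shows "powi_prod z (\<lambda>j. (if j = i then 1 else 0) + (if s then - n j else n j))
    = z i * (if s then cnj else id) (powi_prod z n)"
proof -
  have nonzero: "z j \<noteq> 0" for j
    using assms[of j] by auto
  have "z j * cnj (z j) = 1" for j
    using assms[of j] complex_norm_square[of "z j"] by simp
  then have "cnj (z j) = inverse (z j)" for j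
    by (metis inverse_unique)
  then have cnj_powi_prod: "cnj (powi_prod z n) = powi_prod z (\<lambda>j. - n j)"
    by (simp add: powi_prod_def power_int_minus power_int_inverse)
  have "powi_prod z (\<lambda>j. (if j = i then 1 else 0) + (if s then - n j else n j))
      = (\<Prod>j\<in>UNIV. z j powi (if j = i then 1 else 0)) * powi_prod z (\<lambda>j. if s then - n j else n j)"
    unfolding powi_prod_def prod.distrib[symmetric] by (rule prod.cong) (auto simp: power_int_add nonzero)
  also have "(\<Prod>j\<in>UNIV. z j powi (if j = i then 1 else 0)) = z i"
    by (simp add: if_distrib[of "\<lambda>k. z _ powi k"] prod.If_cases)
  finally show ?thesis
    by (cases s) (simp_all add: cnj_powi_prod)
qed

context
  fixes u v :: "'n::finite"
  assumes u_neq_v: "u \<noteq> v" and UNIV_eq: "(UNIV :: 'n set) = {u, v}"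
begin

lemma matrix_matrix_mult_entry_plane:
  "((A :: real^'n^'n) ** B)$i$j = A$i$u * B$u$j + A$i$v * B$v$j"
  using u_neq_v by (simp add: matrix_matrix_mult_def UNIV_eq)

lemma all_plane_iff: "(\<forall>i::'n. P i) \<longleftrightarrow> P u \<and> P v"
  using UNIV_eq by (metis UNIV_I insertCI insertE singletonD)

lemma matrix_eq_plane_iff:
  "(A :: real^'n^'n) = B \<longleftrightarrow> A$u$u = B$u$u \<and> A$u$v = B$u$v \<and> A$v$u = B$v$u \<and> A$v$v = B$v$v"
  by (auto simp: vec_eq_iff all_plane_iff)

lemma orthogonal_matrix_plane_entries:
  assumes "orthogonal_matrix (A :: real^'n^'n)"
  shows "(A$u$u)\<^sup>2 + (A$v$u)\<^sup>2 = 1" "(A$u$u)\<^sup>2 + (A$u$v)\<^sup>2 = 1" "(A$v$u)\<^sup>2 + (A$v$v)\<^sup>2 = 1"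
    "A$u$u * A$v$u + A$u$v * A$v$v = 0"
proof -
  have "(transpose A ** A)$i$j = mat 1 $i$j" "(A ** transpose A)$i$j = mat 1 $i$j" for i j
    using assms by (auto simp: orthogonal_matrix_def)
  note entries = this[unfolded matrix_matrix_mult_entry_plane]
  show "(A$u$u)\<^sup>2 + (A$v$u)\<^sup>2 = 1" "(A$u$u)\<^sup>2 + (A$u$v)\<^sup>2 = 1" "(A$v$u)\<^sup>2 + (A$v$v)\<^sup>2 = 1"
    using entries(1)[of u u] entries(2)[of u u] entries(2)[of v v]
    by (simp_all add: transpose_def mat_def power2_eq_square)
  show "A$u$u * A$v$u + A$u$v * A$v$v = 0"
    using entries(2)[of u v] u_neq_v by (simp add: transpose_def mat_def)
qed

lemma orthogonal_matrix_plane_rotation_xor_reflection: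
  assumes "orthogonal_matrix (A :: real^'n^'n)"
  shows "is_rotation2 u v A \<noteq> is_reflection2 u v A"
proof -
  define a b c d where "a = A$u$u" and "b = A$u$v" and "c = A$v$u" and "d = A$v$v"
  note rows = orthogonal_matrix_plane_entries[OF assms, folded a_def b_def c_def d_def]
  have "(a*d - b*c)\<^sup>2 = (a\<^sup>2 + b\<^sup>2) * (c\<^sup>2 + d\<^sup>2) - (a*c + b*d)\<^sup>2"
    by (simp add: power2_eq_square algebra_simps)
  then have det: "a*d - b*c = 1 \<or> a*d - b*c = -1"
    using rows by (simp add: power2_eq_1_iff)
  have sum: "a\<^sup>2 + b\<^sup>2 + c\<^sup>2 + d\<^sup>2 = 2"
    using rows by simp
  from det have "(a = d \<and> b = - c) \<or> (a = - d \<and> b = c)"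
  proof
    assume "a*d - b*c = 1"
    then have "(a - d)\<^sup>2 + (b + c)\<^sup>2 = 0"
      using sum by (simp add: power2_eq_square algebra_simps)
    then show ?thesis
      by (simp add: sum_power2_eq_zero_iff)
  next
    assume "a*d - b*c = -1"
    then have "(a + d)\<^sup>2 + (b - c)\<^sup>2 = 0"
      using sum by (simp add: power2_eq_square algebra_simps)
    then show ?thesis
      by (simp add: sum_power2_eq_zero_iff)
  qed
  moreover have "a \<noteq> 0 \<or> c \<noteq> 0"
    using rows(1) by auto
  ultimately show ?thesis
    by (auto simp: is_rotation2_def is_reflection2_def a_def b_def c_def d_def)
qed

lemma norm_column_complex: "orthogonal_matrix A \<Longrightarrow> cmod (column_complex u v A) = 1"
  using orthogonal_matrix_plane_entries(1)[of A] by (simp add: column_complex_def cmod_def)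

lemma orthogonal_matrix_plane_eqI:
  assumes "orthogonal_matrix A" "orthogonal_matrix B"
    and "is_reflection2 u v A = is_reflection2 u v B" "column_complex u v A = column_complex u v B"
  shows "A = B"
  using assms orthogonal_matrix_plane_rotation_xor_reflection[OF assms(1)]
    orthogonal_matrix_plane_rotation_xor_reflection[OF assms(2)]
  by (auto simp: is_rotation2_def is_reflection2_def column_complex_def matrix_eq_plane_iff complex_eq_iff)

lemma orthogonal_matrix_plane_mult:
  assumes A: "orthogonal_matrix A" and B: "orthogonal_matrix B"
  shows "is_reflection2 u v (A ** B) \<longleftrightarrow> is_reflection2 u v A \<noteq> is_reflection2 u v B"
    and "column_complex u v (A ** B)
      = column_complex u v A * (if is_reflection2 u v A then cnj else id) (column_complex u v B)"
proof -
  note xor = orthogonal_matrix_plane_rotation_xor_reflection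
  note defs = is_rotation2_def is_reflection2_def column_complex_def
    matrix_matrix_mult_entry_plane complex_eq_iff algebra_simps
  have "is_rotation2 u v A \<Longrightarrow> is_rotation2 u v B \<Longrightarrow> is_rotation2 u v (A ** B)"
    "is_rotation2 u v A \<Longrightarrow> is_reflection2 u v B \<Longrightarrow> is_reflection2 u v (A ** B)"
    "is_reflection2 u v A \<Longrightarrow> is_rotation2 u v B \<Longrightarrow> is_reflection2 u v (A ** B)"
    "is_reflection2 u v A \<Longrightarrow> is_reflection2 u v B \<Longrightarrow> is_rotation2 u v (A ** B)"
    by (auto simp: defs)
  then show "is_reflection2 u v (A ** B) \<longleftrightarrow> is_reflection2 u v A \<noteq> is_reflection2 u v B"
    using xor[OF A] xor[OF B] xor[OF orthogonal_matrix_mul[OF A B]] by blast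
  have "is_rotation2 u v A \<Longrightarrow> column_complex u v (A ** B) = column_complex u v A * column_complex u v B"
    "is_reflection2 u v A \<Longrightarrow>
      column_complex u v (A ** B) = column_complex u v A * cnj (column_complex u v B)"
    by (auto simp: defs)
  then show "column_complex u v (A ** B)
      = column_complex u v A * (if is_reflection2 u v A then cnj else id) (column_complex u v B)"
    using xor[OF A] by auto
qed

lemma word_matrix_plane_representation:
  fixes M :: "'i::finite \<Rightarrow> real^'n^'n"
  assumes orth: "\<And>i. orthogonal_matrix (M i)"
  defines "r \<equiv> \<lambda>i. is_reflection2 u v (M i)"
  shows "is_reflection2 u v (word_matrix M I) \<longleftrightarrow> odd (length (filter r I))"
    and "column_complex u v (word_matrix M I) = powi_prod (\<lambda>j. column_complex u v (M j)) (twisted_exponent r I)"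
proof (induction I)
  case Nil
  show "is_reflection2 u v (word_matrix M []) \<longleftrightarrow> odd (length (filter r []))"
    and "column_complex u v (word_matrix M []) = powi_prod (\<lambda>j. column_complex u v (M j)) (twisted_exponent r [])"
    using u_neq_v by (simp_all add: is_reflection2_def column_complex_def powi_prod_def mat_def complex_eq_iff)
next
  case (Cons i I)
  note mult = orthogonal_matrix_plane_mult[OF orth[of i] orthogonal_matrix_word_matrix[of M I, OF orth]]
  show "is_reflection2 u v (word_matrix M (i # I)) \<longleftrightarrow> odd (length (filter r (i # I)))"
    using Cons(1) mult(1) by (simp add: r_def)
  show "column_complex u v (word_matrix M (i # I))
      = powi_prod (\<lambda>j. column_complex u v (M j)) (twisted_exponent r (i # I))"
  proof -
    have "cmod (column_complex u v (M j)) = 1" for j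
      using norm_column_complex orth by blast
    note step = powi_prod_twisted_step[where z="\<lambda>j. column_complex u v (M j)", OF this]
    have "column_complex u v (word_matrix M (i # I))
        = column_complex u v (M i) * (if r i then cnj else id)
            (powi_prod (\<lambda>j. column_complex u v (M j)) (twisted_exponent r I))"
      using Cons(2) mult(2) by (simp add: r_def)
    also have "\<dots> = powi_prod (\<lambda>j. column_complex u v (M j)) (twisted_exponent r (i # I))"
      using step by simp
    finally show ?thesis .
  qed
qed

lemma word_matrix_plane_eqI:
  fixes M :: "'i::finite \<Rightarrow> real^'n^'n"
  assumes orth: "\<And>i. orthogonal_matrix (M i)"
    and "mset I = mset J"
    and "twisted_exponent (\<lambda>i. is_reflection2 u v (M i)) I = twisted_exponent (\<lambda>i. is_reflection2 u v (M i)) J"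
  shows "word_matrix M I = word_matrix M J"
proof (rule orthogonal_matrix_plane_eqI)
  have "length (filter P I) = length (filter P J)" for P
    using \<open>mset I = mset J\<close> by (metis mset_filter size_mset)
  then show "is_reflection2 u v (word_matrix M I) = is_reflection2 u v (word_matrix M J)"
    by (simp add: word_matrix_plane_representation(1)[OF orth])
  show "column_complex u v (word_matrix M I) = column_complex u v (word_matrix M J)"
    using assms(3) by (simp add: word_matrix_plane_representation(2)[OF orth])
qed (use orth orthogonal_matrix_word_matrix in blast)+

end

subsection \<open>Counting the maps T_I\<close>

lemma word_matrix_determined_by_word_invariants:
  fixes M :: "'i::finite \<Rightarrow> real^'n::finite^'n"
  assumes orth: "\<And>i. orthogonal_matrix (M i)"
    and cases: "CARD('n) = 1 \<or> CARD('n) = 2 \<or> (\<forall>i j. M i ** M j = M j ** M i)"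
  obtains r where "\<And>I J. mset I = mset J \<Longrightarrow> twisted_exponent r I = twisted_exponent r J \<Longrightarrow>
    word_matrix M I = word_matrix M J"
proof (cases "CARD('n) = 2")
  case True
  then obtain u v :: 'n where "u \<noteq> v" "UNIV = {u, v}"
    by (metis card_2_iff)
  then show ?thesis
    using word_matrix_plane_eqI[of u v M, OF _ _ orth] that by blast
next
  case False
  then have "M i ** M j = M j ** M i" for i j
    using cases matrix_mul_commute_if_CARD_1 by blast
  then show ?thesis
    using word_matrix_mset_eq that by blast
qed

lemma card_word_invariants_le:
  fixes W :: "'i::finite list set"
  assumes "\<And>I. I \<in> W \<Longrightarrow> length I \<le> L"
  shows "finite ((\<lambda>I. (count (mset I), twisted_exponent r I)) ` W)"
    and "card ((\<lambda>I. (count (mset I), twisted_exponent r I)) ` W) \<le> (2 * L + 1) ^ (2 * CARD('i))"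
proof -
  define S :: "(('i \<Rightarrow> nat) \<times> ('i \<Rightarrow> int)) set"
    where "S = (UNIV \<rightarrow>\<^sub>E {0..L}) \<times> (UNIV \<rightarrow>\<^sub>E {- int L..int L})"
  have "(\<lambda>I. (count (mset I), twisted_exponent r I)) ` W \<subseteq> S"
  proof clarify
    fix I assume "I \<in> W"
    then have "count (mset I) i \<in> {0..L}" "twisted_exponent r I i \<in> {- int L..int L}" for i
      using assms[OF \<open>I \<in> W\<close>] count_le_length[of I i] abs_twisted_exponent_le[of r I i]
      by (auto simp: count_mset abs_le_iff)
    then show "(count (mset I), twisted_exponent r I) \<in> S"
      by (simp add: S_def PiE_iff)
  qed
  moreover have "finite S"
    by (simp add: S_def finite_PiE)
  moreover have "card S \<le> (2 * L + 1) ^ (2 * CARD('i))"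
  proof -
    have "nat (2 * int L + 1) = 2 * L + 1"
      by (simp add: nat_eq_iff)
    then have "card S = (L + 1) ^ CARD('i) * (2 * L + 1) ^ CARD('i)"
      by (simp add: S_def card_cartesian_product card_PiE)
    also have "\<dots> \<le> (2 * L + 1) ^ CARD('i) * (2 * L + 1) ^ CARD('i)"
      by (intro mult_right_mono power_mono) auto
    finally show ?thesis
      by (simp add: mult_2 power_add)
  qed
  ultimately show "finite ((\<lambda>I. (count (mset I), twisted_exponent r I)) ` W)"
    and "card ((\<lambda>I. (count (mset I), twisted_exponent r I)) ` W) \<le> (2 * L + 1) ^ (2 * CARD('i))"
    by (auto intro: finite_subset card_mono order_trans)
qed

lemma card_level_maps_polynomial_bound:
  fixes c :: "'i::finite \<Rightarrow> real" and M :: "'i \<Rightarrow> real^'n^'n"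
  assumes c_pos: "\<And>i. 0 < c i" and c_lt1: "\<And>i. c i < 1"
    and orth: "\<And>i. orthogonal_matrix (M i)"
    and cases: "CARD('n) = 1 \<or> CARD('n) = 2 \<or> (\<forall>i j. M i ** M j = M j ** M i)"
  obtains K :: real and p where "K > 0" and
    "\<And>k. real (card ((\<lambda>I. word_map (\<lambda>i x. c i *\<^sub>R (M i *v x)) I) ` level_words c k))
      \<le> K * (real k + 1) ^ p"
proof -
  obtain A where length_le: "\<And>k I. I \<in> level_words c k \<Longrightarrow> length I \<le> A * (k + 1)"
    using level_words_length_le[of c, OF c_pos c_lt1] by blast
  obtain r where word_matrix_eq: "\<And>I J. mset I = mset J \<Longrightarrow> twisted_exponent r I = twisted_exponent r J \<Longrightarrow>
      word_matrix M I = word_matrix M J"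
    using word_matrix_determined_by_word_invariants[of M, OF orth cases] by blast
  define p where "p = 2 * CARD('i)"
  have card_le: "card ((\<lambda>I. word_map (\<lambda>i x. c i *\<^sub>R (M i *v x)) I) ` level_words c k)
      \<le> (2 * (A * (k + 1)) + 1) ^ p" for k
  proof -
    note invariants = card_word_invariants_le[where W="level_words c k" and L="A * (k + 1)" and r=r, OF length_le]
    have "card ((\<lambda>I. word_map (\<lambda>i x. c i *\<^sub>R (M i *v x)) I) ` level_words c k)
        \<le> card ((\<lambda>I. (count (mset I), twisted_exponent r I)) ` level_words c k)"
    proof (rule card_image_le_if_factors[OF invariants(1)])
      fix I J assume "(count (mset I), twisted_exponent r I) = (count (mset J), twisted_exponent r J)"
      then have "mset I = mset J" and "twisted_exponent r I = twisted_exponent r J"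
        by (auto intro: multiset_eqI)
      then have "word_matrix M I = word_matrix M J" and "word_ratio c I = word_ratio c J"
        using word_matrix_eq word_ratio_mset_eq by blast+
      then show "word_map (\<lambda>i x. c i *\<^sub>R (M i *v x)) I = word_map (\<lambda>i x. c i *\<^sub>R (M i *v x)) J"
        by (simp add: word_map_scaled_linear)
    qed
    with invariants(2) show ?thesis
      unfolding p_def by linarith
  qed
  have real_le: "real ((2 * (A * (k + 1)) + 1) ^ p) \<le> (2 * real A + 1) ^ p * (real k + 1) ^ p" for k
  proof -
    have "real (2 * (A * (k + 1)) + 1) \<le> (2 * real A + 1) * (real k + 1)"
      by (simp add: algebra_simps)
    then have "real (2 * (A * (k + 1)) + 1) ^ p \<le> ((2 * real A + 1) * (real k + 1)) ^ p"
      by (rule power_mono) simp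
    then show ?thesis
      by (simp add: power_mult_distrib)
  qed
  show ?thesis
    by (rule that[of "(2 * real A + 1) ^ p" p]) (simp, rule order_trans[OF of_nat_mono[OF card_le] real_le])
qed

theorem lemma4p4:
  fixes c :: "'i::finite \<Rightarrow> real"
    and M :: "'i \<Rightarrow> real^'n^'n"
    and b :: "'i \<Rightarrow> real^'n"
    and \<gamma> :: real
  assumes c_pos: "\<And>i. 0 < c i" and c_lt1: "\<And>i. c i < 1"
    and M_orth: "\<And>i. orthogonal_matrix (M i)"
    and gamma_nonneg: "\<gamma> \<ge> 0"
    and gamma_def: "limsup (\<lambda>k::nat. ereal (real (card
          ((\<lambda>I. word_map (\<lambda>i x. c i *\<^sub>R (M i *v x)) I) ` level_words c k)) powr (1 / real k)))
        = ereal (2 powr \<gamma>)"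
    and cases: "CARD('n) = 1 \<or> CARD('n) = 2 \<or> (\<forall>i j. M i ** M j = M j ** M i)"
  shows "\<gamma> = 0"
proof -
  obtain K p where "K > 0" and bound: "\<And>k. real (card
      ((\<lambda>I. word_map (\<lambda>i x. c i *\<^sub>R (M i *v x)) I) ` level_words c k)) \<le> K * (real k + 1) ^ p"
    using card_level_maps_polynomial_bound[of c M, OF c_pos c_lt1 M_orth cases] by blast
  have "ereal (2 powr \<gamma>) \<le> 1"
    unfolding gamma_def[symmetric]
    by (rule limsup_root_le_1_if_polynomial_bound[OF bound _ \<open>K > 0\<close>]) simp
  then show "\<gamma> = 0"
    using powr_le_cancel_iff[of 2 \<gamma> 0] gamma_nonneg by simp
qed

end
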